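(* For every $0<\epsilon<1$ there is an infinite family of graphs $G_n$ on $n$ vertices ($n\to\infty$) with edge density at most $1+\Theta(n^{-\epsilon})$ such that Broadcast on $G_n$ is not solvable with fewer than $\Theta(n^{1-\epsilon})$ ignorant agents.
   Context: Edge density of a graph with $m$ edges and $n$ nodes is $m/n$. Broadcast model: a connected base graph $G=(V,E)$ with $n$ nodes. There is one source agent holding a message $\mathcal M$ and $k\ge1$ ignorant agents (agents not holding $\mathcal M$); initially all agents occupy pairwise distinct nodes, the initial placement being chosen by the adversary. Time proceeds in synchronous rounds; in each round: (1) the adversary removes a (possibly empty) set $E'\subseteq E$ of edges such that $(V,E\setminus E')$ is connected; (2) each agent (agents have unique IDs, local memory, and see the entire current graph, the positions of all agents and which agents hold $\mathcal M$) chooses either to stay or to traverse an edge of $E\setminus E'$ incident to its current node; (3) agents move. Whenever an ignorant agent is at the same node as an agent holding $\mathcal M$, it receives $\mathcal M$ and becomes a source agent. The adversary is adaptive and knows the agents' strategy. Broadcast is solvable on $G$ with $k$ ignorant agents if the agents have a strategy such that, for every initial placement and every adversary behaviour, after finitely many rounds all agents hold $\mathcal M$; otherwise the adversary is said to have a winning strategy. *)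

theory Defs
  imports Complex_Main
begin

definition graph_on :: "nat set \<Rightarrow> nat set set \<Rightarrow> bool" where
  "graph_on V E \<longleftrightarrow> E \<subseteq> {{u, v} | u v. u \<in> V \<and> v \<in> V \<and> u \<noteq> v}"

definition connected_graph :: "nat set \<Rightarrow> nat set set \<Rightarrow> bool" where
  "connected_graph V E \<longleftrightarrow>
     (\<forall>u\<in>V. \<forall>v\<in>V. (u, v) \<in> {(x, y). {x, y} \<in> E}\<^sup>*)"

(* Agents are 0..k; agent 0 is the source, agents 1..k are initially ignorant.
   A configuration: positions of agents and the set of agents holding the message. *)
type_synonym config = "(nat \<Rightarrow> nat) \<times> nat set"
(* history: past configurations together with the edge set removed in that round *)
type_synonym hist = "(config \<times> nat set set) list"

definition inform :: "nat \<Rightarrow> nat set \<Rightarrow> (nat \<Rightarrow> nat) \<Rightarrow> nat set" where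
  "inform k I p = I \<union> {i \<in> {0..k}. \<exists>j\<in>I. p i = p j}"

(* sigma: (joint, deterministic, full-information) agent strategy: given history,
   current configuration and the currently removed edges, the new positions.
   alpha: adaptive adversary: given history and current configuration, edges removed. *)
primrec run :: "(hist \<Rightarrow> config \<Rightarrow> nat set set \<Rightarrow> (nat \<Rightarrow> nat)) \<Rightarrow>
    (hist \<Rightarrow> config \<Rightarrow> nat set set) \<Rightarrow> nat \<Rightarrow> (nat \<Rightarrow> nat) \<Rightarrow> nat \<Rightarrow> hist \<times> config" where
  "run \<sigma> \<alpha> k p0 0 = ([], (p0, {0}))"
| "run \<sigma> \<alpha> k p0 (Suc t) =
     (let (h, c) = run \<sigma> \<alpha> k p0 t; R = \<alpha> h c; p' = \<sigma> h c R
      in (h @ [(c, R)], (p', inform k (snd c) p')))"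

definition legal_move :: "nat set set \<Rightarrow> nat \<Rightarrow> nat set set \<Rightarrow> (nat \<Rightarrow> nat) \<Rightarrow> (nat \<Rightarrow> nat) \<Rightarrow> bool" where
  "legal_move E k R p p' \<longleftrightarrow> (\<forall>i\<in>{0..k}. p' i = p i \<or> {p i, p' i} \<in> E - R)"

definition broadcast_solvable :: "nat set \<Rightarrow> nat set set \<Rightarrow> nat \<Rightarrow> bool" where
  "broadcast_solvable V E k \<longleftrightarrow>
     (\<exists>\<sigma>. \<forall>p0. inj_on p0 {0..k} \<and> p0 ` {0..k} \<subseteq> V \<longrightarrow>
        (\<forall>\<alpha>. (\<forall>h c. \<alpha> h c \<subseteq> E \<and> connected_graph V (E - \<alpha> h c)) \<longrightarrow>
           (\<forall>t. case run \<sigma> \<alpha> k p0 t of (h, c) \<Rightarrow>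
                  legal_move E k (\<alpha> h c) (fst c) (\<sigma> h c (\<alpha> h c))) \<and>
           (\<exists>t. {0..k} \<subseteq> snd (snd (run \<sigma> \<alpha> k p0 t)))))"

end

theory Submission imports Defs begin

text \<open>
  The graph is a spider with \<open>d \<approx> n powr (1 - \<epsilon>) / 4\<close> legs of length two, hub \<open>0\<close> -- middle \<open>j\<close> --
  end \<open>d + j\<close>, whose ends lie on a path through the remaining vertices; it has \<open>n + d - 2\<close>
  edges. The source starts at the hub and the ignorant agents at leg ends. The adversary cuts
  the hub edge of every leg whose middle holds an ignorant agent, and otherwise the outer edge
  of a leg whose middle holds the source or whose end holds an ignorant agent. Then the source
  stays on the hub and the middles, the ignorant agents never reach the hub, and the two never
  meet. At most one edge per leg is cut and, with more legs than agents, some leg is entirely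
  open, so the graph stays connected.
\<close>

lemma connected_graph_mono:
  assumes "connected_graph V E" and "E \<subseteq> E'"
  shows "connected_graph V E'"
proof -
  have "{(x, y). {x, y} \<in> E}\<^sup>* \<subseteq> {(x, y). {x, y} \<in> E'}\<^sup>*"
    using assms(2) by (intro rtrancl_mono) auto
  thus ?thesis using assms(1) unfolding connected_graph_def by blast
qed

lemma connected_graphI_hub:
  assumes "\<And>u. u \<in> V \<Longrightarrow> (u, w) \<in> {(x, y). {x, y} \<in> E}\<^sup>*"
  shows "connected_graph V E"
proof -
  have "sym {(x, y). {x, y} \<in> E}"
    by (auto simp: sym_def insert_commute)
  hence "(w, v) \<in> {(x, y). {x, y} \<in> E}\<^sup>*" if "v \<in> V" for v
    using assms that by (meson sym_rtrancl symD)
  thus ?thesis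
    unfolding connected_graph_def using assms by (meson rtrancl_trans)
qed

lemma inform_source_only:
  assumes "\<forall>i\<in>{1..k}. p i \<noteq> p 0"
  shows "inform k {0} p = {0}"
  using assms unfolding inform_def by (auto simp: le_neq_implies_less)

lemma not_broadcast_solvableI:
  fixes P :: "(nat \<Rightarrow> nat) \<Rightarrow> bool" and R :: "(nat \<Rightarrow> nat) \<Rightarrow> nat set set"
  assumes "1 \<le> k" and "inj_on p0 {0..k}" and "p0 ` {0..k} \<subseteq> V" and "P p0"
    and "\<And>p. R p \<subseteq> E" and "\<And>p. connected_graph V (E - R p)"
    and P_step: "\<And>p p'. P p \<Longrightarrow> legal_move E k (R p) p p' \<Longrightarrow> P p'"
    and P_apart: "\<And>p. P p \<Longrightarrow> \<forall>i\<in>{1..k}. p i \<noteq> p 0"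
  shows "\<not> broadcast_solvable V E k"
proof
  assume "broadcast_solvable V E k"
  then obtain \<sigma> where \<sigma>: "\<forall>p0. inj_on p0 {0..k} \<and> p0 ` {0..k} \<subseteq> V \<longrightarrow>
        (\<forall>\<alpha>. (\<forall>h c. \<alpha> h c \<subseteq> E \<and> connected_graph V (E - \<alpha> h c)) \<longrightarrow>
           (\<forall>t. case run \<sigma> \<alpha> k p0 t of (h, c) \<Rightarrow>
                  legal_move E k (\<alpha> h c) (fst c) (\<sigma> h c (\<alpha> h c))) \<and>
           (\<exists>t. {0..k} \<subseteq> snd (snd (run \<sigma> \<alpha> k p0 t))))"
    unfolding broadcast_solvable_def by blast
  define \<alpha> where "\<alpha> h c = R (fst c)" for h :: hist and c :: config
  have adm: "\<forall>h c. \<alpha> h c \<subseteq> E \<and> connected_graph V (E - \<alpha> h c)"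
    unfolding \<alpha>_def using assms(5,6) by blast
  note moves_and_termination =
    mp[OF spec[OF mp[OF spec[OF \<sigma>, of p0] conjI[OF assms(2,3)]], of \<alpha>] adm]
  note legal = moves_and_termination[THEN conjunct1, rule_format]
    and informed = moves_and_termination[THEN conjunct2]
  have run_inv: "P (fst (snd (run \<sigma> \<alpha> k p0 t))) \<and> snd (snd (run \<sigma> \<alpha> k p0 t)) = {0}" for t
  proof (induction t)
    case 0
    show ?case using \<open>P p0\<close> by simp
  next
    case (Suc t)
    obtain h c where hc: "run \<sigma> \<alpha> k p0 t = (h, c)" by (cases "run \<sigma> \<alpha> k p0 t") simp
    have "P (\<sigma> h c (\<alpha> h c))"
      using P_step[of "fst c"] legal[where t=t] Suc hc unfolding \<alpha>_def by simp
    thus ?case using Suc hc inform_source_only[OF P_apart] by (simp add: Let_def)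
  qed
  obtain t where "{0..k} \<subseteq> snd (snd (run \<sigma> \<alpha> k p0 t))"
    using informed by blast
  hence "1 \<in> snd (snd (run \<sigma> \<alpha> k p0 t))" using \<open>1 \<le> k\<close> by auto
  thus False using run_inv[of t] by simp
qed

definition spider_edges :: "nat \<Rightarrow> nat \<Rightarrow> nat set set" where
  "spider_edges d n =
     (\<lambda>j. {0, j}) ` {1..d} \<union> (\<lambda>j. {j, d + j}) ` {1..d} \<union> (\<lambda>i. {i, Suc i}) ` {d<..<n - 1}"

definition blocked_edges :: "nat \<Rightarrow> nat \<Rightarrow> (nat \<Rightarrow> nat) \<Rightarrow> nat set set" where
  "blocked_edges d k p =
     (\<lambda>j. {0, j}) ` {j \<in> {1..d}. \<exists>i\<in>{1..k}. p i = j} \<union>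
     (\<lambda>j. {j, d + j}) ` {j \<in> {1..d}. (\<forall>i\<in>{1..k}. p i \<noteq> j) \<and>
                                      (p 0 = j \<or> (\<exists>i\<in>{1..k}. p i = d + j))}"

lemma spider_edge_cases:
  assumes "{a, b} \<in> spider_edges d n" and "1 \<le> d"
  shows "(a = 0 \<and> 1 \<le> b \<and> b \<le> d) \<or> (b = 0 \<and> 1 \<le> a \<and> a \<le> d) \<or>
         (1 \<le> a \<and> a \<le> d \<and> b = d + a) \<or> (1 \<le> b \<and> b \<le> d \<and> a = d + b) \<or> (d < a \<and> d < b)"
  using assms unfolding spider_edges_def by (auto simp: doubleton_eq_iff)

lemma graph_on_spider:
  assumes "2 * d + 1 \<le> n"
  shows "graph_on {0..<n} (spider_edges d n)"
  using assms unfolding graph_on_def spider_edges_def by fastforce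

lemma card_spider_edges: "card (spider_edges d n) \<le> d + d + (n - 2 - d)"
proof -
  have "card (spider_edges d n) \<le> card ((\<lambda>j. {0, j}) ` {1..d}) + card ((\<lambda>j. {j, d + j}) ` {1..d})
      + card ((\<lambda>i. {i, Suc i}) ` {d<..<n - 1})"
    unfolding spider_edges_def by (meson card_Un_le add_le_mono1 order_trans)
  also have "\<dots> \<le> d + d + (n - 2 - d)"
    using card_image_le[of "{1..d}" "\<lambda>j. {0, j}"] card_image_le[of "{1..d}" "\<lambda>j. {j, d + j}"]
      card_image_le[of "{d<..<n - 1}" "\<lambda>i. {i, Suc i}"] by simp
  finally show ?thesis .
qed

lemma hub_edge_blockedI:
  "1 \<le> j \<Longrightarrow> j \<le> d \<Longrightarrow> i \<in> {1..k} \<Longrightarrow> p i = j \<Longrightarrow> {0, j} \<in> blocked_edges d k p"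
  unfolding blocked_edges_def by (intro UnI1 image_eqI[where x = j]) auto

lemma leg_edge_blockedI:
  "1 \<le> j \<Longrightarrow> j \<le> d \<Longrightarrow> \<forall>i\<in>{1..k}. p i \<noteq> j \<Longrightarrow> p 0 = j \<or> (\<exists>i\<in>{1..k}. p i = d + j) \<Longrightarrow>
   {j, d + j} \<in> blocked_edges d k p"
  unfolding blocked_edges_def by (intro UnI2 image_eqI[where x = j]) auto

lemma hub_edge_blockedD:
  "{0, j} \<in> blocked_edges d k p \<Longrightarrow> 1 \<le> j \<Longrightarrow> \<exists>i\<in>{1..k}. p i = j"
  unfolding blocked_edges_def by (auto simp: doubleton_eq_iff)

lemma leg_edge_blockedD:
  "{j, d + j} \<in> blocked_edges d k p \<Longrightarrow> 1 \<le> j \<Longrightarrow> j \<le> d \<Longrightarrow>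
   (\<forall>i\<in>{1..k}. p i \<noteq> j) \<and> (p 0 = j \<or> (\<exists>i\<in>{1..k}. p i = d + j))"
  unfolding blocked_edges_def by (auto simp: doubleton_eq_iff)

lemma tail_edge_not_blocked: "d < i \<Longrightarrow> {i, Suc i} \<notin> blocked_edges d k p"
  unfolding blocked_edges_def by (auto simp: doubleton_eq_iff)

lemma blocked_edges_subset: "blocked_edges d k p \<subseteq> spider_edges d n"
proof -
  have "blocked_edges d k p \<subseteq> (\<lambda>j. {0, j}) ` {1..d} \<union> (\<lambda>j. {j, d + j}) ` {1..d}"
    unfolding blocked_edges_def by (intro Un_mono image_mono) auto
  thus ?thesis unfolding spider_edges_def by blast
qed

lemma exists_unoccupied_leg:
  fixes p :: "nat \<Rightarrow> nat"
  assumes "k + 2 \<le> d"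
  shows "\<exists>j\<in>{1..d}. \<forall>i\<in>{0..k}. p i \<noteq> j \<and> p i \<noteq> d + j"
proof -
  define leg where "leg i = (if p i \<le> d then p i else p i - d)" for i
  have "card (leg ` {0..k}) < card {1..d}"
    using card_image_le[of "{0..k}" leg] assms by simp
  hence "\<not> {1..d} \<subseteq> leg ` {0..k}"
    using card_mono[of "leg ` {0..k}" "{1..d}"] by fastforce
  then obtain j where j: "j \<in> {1..d}" "j \<notin> leg ` {0..k}" by blast
  hence "\<forall>i\<in>{0..k}. p i \<noteq> j \<and> p i \<noteq> d + j"
    unfolding leg_def by (force simp: image_iff)
  thus ?thesis using j(1) by blast
qed

lemma connected_spider_minus_blocked:
  assumes "k + 2 \<le> d" and "2 * d + 1 \<le> n"
  shows "connected_graph {0..<n} (spider_edges d n - blocked_edges d k p)"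
proof (rule connected_graphI_hub)
  define F where "F = spider_edges d n - blocked_edges d k p"
  define rel where "rel = {(x, y). {x, y} \<in> F}"
  have edge: "(a, b) \<in> rel\<^sup>*" if "{a, b} \<in> F" for a b
    using that unfolding rel_def by auto
  have tail_path: "d + 1 + m < n \<longrightarrow> (d + 1 + m, d + 1) \<in> rel\<^sup>*" for m
  proof (induction m)
    case (Suc m)
    show ?case
    proof
      assume m: "d + 1 + Suc m < n"
      hence "{d + 1 + Suc m, d + 1 + m} \<in> F"
        using tail_edge_not_blocked[of d "d + 1 + m" k p]
        unfolding F_def spider_edges_def by (auto simp: insert_commute)
      moreover have "(d + 1 + m, d + 1) \<in> rel\<^sup>*" using Suc m by simp
      ultimately show "(d + 1 + Suc m, d + 1) \<in> rel\<^sup>*" using edge by (meson rtrancl_trans)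
    qed
  qed simp
  have tail: "(u, d + 1) \<in> rel\<^sup>*" if "d < u" "u < n" for u
    using tail_path[of "u - d - 1"] that by simp
  obtain j0 where j0: "j0 \<in> {1..d}" "\<forall>i\<in>{0..k}. p i \<noteq> j0 \<and> p i \<noteq> d + j0"
    using exists_unoccupied_leg[OF assms(1)] by blast
  have "{0, j0} \<in> F" "{j0, d + j0} \<in> F"
    using j0 hub_edge_blockedD[of j0 d k p] leg_edge_blockedD[of j0 d k p]
    unfolding F_def spider_edges_def by auto
  moreover have "(d + j0, d + 1) \<in> rel\<^sup>*"
    using tail[of "d + j0"] j0(1) assms(2) by simp
  ultimately have hub: "(0, d + 1) \<in> rel\<^sup>*"
    using edge by (meson rtrancl_trans)
  have middle: "(j, d + 1) \<in> rel\<^sup>*" if j: "1 \<le> j" "j \<le> d" for j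
  proof (cases "{j, d + j} \<in> blocked_edges d k p")
    case False
    hence "{j, d + j} \<in> F" unfolding F_def spider_edges_def using j by auto
    moreover have "(d + j, d + 1) \<in> rel\<^sup>*" using tail[of "d + j"] j assms(2) by simp
    ultimately show ?thesis using edge by (meson rtrancl_trans)
  next
    case True
    hence "{j, 0} \<in> F"
      using j leg_edge_blockedD hub_edge_blockedD[of j d k p]
      unfolding F_def spider_edges_def by (auto simp: insert_commute)
    thus ?thesis using edge hub by (meson rtrancl_trans)
  qed
  fix u assume "u \<in> {0..<n}"
  hence "(u, d + 1) \<in> rel\<^sup>*"
    using hub middle tail by (cases "u = 0"; cases "u \<le> d") auto
  thus "(u, d + 1) \<in> {(x, y). {x, y} \<in> spider_edges d n - blocked_edges d k p}\<^sup>*"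
    unfolding rel_def F_def .
qed

lemma connected_spider:
  assumes "2 \<le> d" and "2 * d + 1 \<le> n"
  shows "connected_graph {0..<n} (spider_edges d n)"
  using connected_graph_mono[OF connected_spider_minus_blocked[of 0 d n "\<lambda>_. 0"]] assms by auto

definition source_guarded :: "nat \<Rightarrow> nat \<Rightarrow> (nat \<Rightarrow> nat) \<Rightarrow> bool" where
  "source_guarded d k p \<longleftrightarrow> p 0 \<le> d \<and> (\<forall>i\<in>{1..k}. p i \<noteq> 0 \<and> p i \<noteq> p 0)"

context
  fixes d n k :: nat and p p' :: "nat \<Rightarrow> nat"
  assumes guarded: "source_guarded d k p"
    and legal: "legal_move (spider_edges d n) k (blocked_edges d k p) p p'"
    and d_pos: "1 \<le> d"
begin

lemma moved_along_open_edge: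
  "i \<in> {0..k} \<Longrightarrow> p' i \<noteq> p i \<Longrightarrow>
   {p i, p' i} \<in> spider_edges d n \<and> {p i, p' i} \<notin> blocked_edges d k p"
  using legal unfolding legal_move_def by blast

lemma source_move_cases:
  "p' 0 = p 0 \<or> p' 0 = 0 \<or>
   (p 0 = 0 \<and> 1 \<le> p' 0 \<and> p' 0 \<le> d \<and> {0, p' 0} \<notin> blocked_edges d k p)"
proof (cases "p' 0 = p 0")
  case False
  hence e: "{p 0, p' 0} \<in> spider_edges d n" "{p 0, p' 0} \<notin> blocked_edges d k p"
    using moved_along_open_edge[of 0] by auto
  show ?thesis
  proof (cases "p 0 = 0")
    case True
    thus ?thesis using spider_edge_cases[OF e(1) d_pos] e(2) by auto
  next
    case False
    hence j: "1 \<le> p 0" "p 0 \<le> d" using guarded unfolding source_guarded_def by auto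
    have "{p 0, d + p 0} \<in> blocked_edges d k p"
      using leg_edge_blockedI[OF j] guarded unfolding source_guarded_def by auto
    thus ?thesis using spider_edge_cases[OF e(1) d_pos] e(2) j by auto
  qed
qed simp

lemma ignorant_avoids_hub:
  assumes i: "i \<in> {1..k}"
  shows "p' i \<noteq> 0"
proof
  assume "p' i = 0"
  moreover have "p i \<noteq> 0" using guarded i unfolding source_guarded_def by blast
  ultimately have e: "{p i, 0} \<in> spider_edges d n" "{p i, 0} \<notin> blocked_edges d k p"
    using moved_along_open_edge[of i] i by auto
  hence "1 \<le> p i" "p i \<le> d" using spider_edge_cases[OF e(1) d_pos] by auto
  hence "{0, p i} \<in> blocked_edges d k p" using hub_edge_blockedI i by blast
  thus False using e(2) by (simp add: insert_commute)
qed

lemma ignorant_avoids_source: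
  assumes i: "i \<in> {1..k}"
  shows "p' i \<noteq> p' 0"
proof
  assume meet: "p' i = p' 0"
  define b where "b = p' 0"
  have b: "1 \<le> b" "b \<le> d"
    using ignorant_avoids_hub[OF i] meet source_move_cases guarded
    unfolding b_def source_guarded_def by auto
  have no_ignorant_at_b: "\<forall>i\<in>{1..k}. p i \<noteq> b"
    using source_move_cases guarded hub_edge_blockedI[OF b]
    unfolding b_def source_guarded_def by auto
  have "p i \<noteq> b" using no_ignorant_at_b i by blast
  hence e: "{p i, b} \<in> spider_edges d n" "{p i, b} \<notin> blocked_edges d k p"
    using moved_along_open_edge[of i] i meet unfolding b_def by auto
  moreover have "p i \<noteq> 0" using guarded i unfolding source_guarded_def by blast
  ultimately have from_leg_end: "p i = d + b"
    using spider_edge_cases[OF e(1) d_pos] b by auto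
  have "{b, d + b} \<in> blocked_edges d k p"
    using leg_edge_blockedI[OF b no_ignorant_at_b] from_leg_end i by blast
  thus False using e(2) from_leg_end by (simp add: insert_commute)
qed

lemma source_guarded_step: "source_guarded d k p'"
  using source_move_cases guarded ignorant_avoids_hub ignorant_avoids_source
  unfolding source_guarded_def by auto

end

lemma not_broadcast_solvable_spider:
  assumes "1 \<le> k" and "k + 2 \<le> d" and "2 * d + 1 \<le> n"
  shows "\<not> broadcast_solvable {0..<n} (spider_edges d n) k"
proof (rule not_broadcast_solvableI[where P = "source_guarded d k" and R = "blocked_edges d k"])
  let ?p0 = "\<lambda>i. if i = 0 then 0 else d + i"
  show "inj_on ?p0 {0..k}" "?p0 ` {0..k} \<subseteq> {0..<n}" "source_guarded d k ?p0"
    using assms unfolding inj_on_def source_guarded_def by auto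
  show "\<And>p p'. source_guarded d k p \<Longrightarrow> legal_move (spider_edges d n) k (blocked_edges d k p) p p' \<Longrightarrow>
      source_guarded d k p'"
    using source_guarded_step assms by simp
qed (use assms blocked_edges_subset connected_spider_minus_blocked in
      \<open>auto simp: source_guarded_def\<close>)

lemma spider_edge_density:
  assumes "2 \<le> d" and "2 * d + 1 \<le> n"
  shows "real (card (spider_edges d n)) / real n \<le> 1 + real (d - 2) / real n"
proof -
  have "card (spider_edges d n) \<le> n + (d - 2)"
    using card_spider_edges[of d n] assms by simp
  hence "real (card (spider_edges d n)) / real n \<le> (real n + real (d - 2)) / real n"
    using assms by (intro divide_right_mono) auto
  also have "\<dots> = 1 + real (d - 2) / real n" using assms by (simp add: field_simps)
  finally show ?thesis .
qed

lemma leg_count_bounds: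
  fixes \<epsilon> :: real
  assumes "0 \<le> \<epsilon>" and "10 \<le> n"
  defines "D \<equiv> nat \<lfloor>real n powr (1 - \<epsilon>) / 4\<rfloor>"
  shows "2 * (D + 2) + 1 \<le> n"
    and "real D / real n \<le> real n powr (- \<epsilon>)"
    and "\<And>k. real k < 1 / 4 * real n powr (1 - \<epsilon>) \<Longrightarrow> k \<le> D"
proof -
  define x where "x = real n powr (1 - \<epsilon>)"
  have x_le_n: "x \<le> real n"
    unfolding x_def using powr_mono[of "1 - \<epsilon>" 1 "real n"] assms by simp
  have x_eq: "x = real n * real n powr (- \<epsilon>)"
    unfolding x_def using powr_add[of "real n" 1 "- \<epsilon>"] assms by simp
  have D_le: "real D \<le> x / 4"
    unfolding D_def x_def using of_int_floor_le[of "real n powr (1 - \<epsilon>) / 4"] by simp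
  have "real (2 * (D + 2) + 1) \<le> real n"
    using D_le x_le_n assms(2) by simp
  thus "2 * (D + 2) + 1 \<le> n" by linarith
  show "real D / real n \<le> real n powr (- \<epsilon>)"
    using D_le x_eq assms(2) by (simp add: field_simps)
  show "k \<le> D" if "real k < 1 / 4 * real n powr (1 - \<epsilon>)" for k
    using that unfolding D_def by linarith
qed

theorem corollary1:
  fixes \<epsilon> :: real
  assumes "0 < \<epsilon>" and "\<epsilon> < 1"
  shows "\<exists>c1 c2 :: real. c1 > 0 \<and> c2 > 0 \<and>
    (\<forall>N::nat. \<exists>n\<ge>N. \<exists>E.
        graph_on {0..<n} E \<and> connected_graph {0..<n} E \<and>
        real (card E) / real n \<le> 1 + c1 * real n powr (- \<epsilon>) \<and>
        (\<forall>k::nat. 1 \<le> k \<and> real k < c2 * real n powr (1 - \<epsilon>) \<longrightarrow>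
            \<not> broadcast_solvable {0..<n} E k))"
proof (rule exI[of _ 1], rule exI[of _ "1 / 4"], intro conjI allI)
  fix N :: nat
  define n where "n = N + 10"
  define d where "d = nat \<lfloor>real n powr (1 - \<epsilon>) / 4\<rfloor> + 2"
  have n: "10 \<le> n" unfolding n_def by simp
  have dn: "2 * d + 1 \<le> n"
    and density: "real (d - 2) / real n \<le> real n powr (- \<epsilon>)"
    and legs: "\<And>k. real k < 1 / 4 * real n powr (1 - \<epsilon>) \<Longrightarrow> k + 2 \<le> d"
    using leg_count_bounds[of \<epsilon> n] assms(1) n unfolding d_def by auto
  have "graph_on {0..<n} (spider_edges d n)" using graph_on_spider[OF dn] .
  moreover have "connected_graph {0..<n} (spider_edges d n)"
    using connected_spider[OF _ dn] unfolding d_def by simp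
  moreover have "real (card (spider_edges d n)) / real n \<le> 1 + 1 * real n powr (- \<epsilon>)"
    using spider_edge_density[OF _ dn] density unfolding d_def by simp
  moreover have "\<forall>k. 1 \<le> k \<and> real k < 1 / 4 * real n powr (1 - \<epsilon>) \<longrightarrow>
      \<not> broadcast_solvable {0..<n} (spider_edges d n) k"
    using not_broadcast_solvable_spider[OF _ legs dn] by blast
  moreover have "N \<le> n" unfolding n_def by simp
  ultimately show "\<exists>n\<ge>N. \<exists>E. graph_on {0..<n} E \<and> connected_graph {0..<n} E \<and>
        real (card E) / real n \<le> 1 + 1 * real n powr (- \<epsilon>) \<and>
        (\<forall>k::nat. 1 \<le> k \<and> real k < 1 / 4 * real n powr (1 - \<epsilon>) \<longrightarrow>
            \<not> broadcast_solvable {0..<n} E k)"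
    by blast
qed simp_all

end
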